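(* Let $\beta \in \mathbb{C}\setminus\mathbb{R}$ be a root of a quadratic polynomial with integer coefficients. Then there is a nonzero polynomial $f \in \mathbb{Z}_{\geq 0}[x]$ with $f(\beta) = 0$; consequently $p_\beta(0) = \infty$, and $p_\beta(\alpha) \in \{0, \infty\}$ for every $\alpha \in \mathbb{C}$.
   Context: For $\beta, \alpha \in \mathbb{C}$, $p_\beta(\alpha) \in \mathbb{Z}_{\geq 0}\cup\{\infty\}$ is the number of polynomials $f \in \mathbb{Z}_{\geq 0}[x]$ (non-negative integer coefficients) with $f(\beta) = \alpha$. *)

theory Defs
  imports "HOL-Computational_Algebra.Polynomial" "HOL-Library.Extended_Nat" Complex_Main
begin

text \<open>Polynomials in Z_{>=0}[x] are represented as nat poly; evaluation at a complex
  number goes through the coercion of the coefficients.\<close>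

definition eval_nat_poly :: "nat poly \<Rightarrow> complex \<Rightarrow> complex" where
  "eval_nat_poly f z = poly (map_poly of_nat f) z"

definition p_count :: "complex \<Rightarrow> complex \<Rightarrow> enat" where
  "p_count \<beta> \<alpha> =
     (let S = {f :: nat poly. eval_nat_poly f \<beta> = \<alpha>}
      in if finite S then enat (card S) else \<infinity>)"

end

theory Submission imports Defs begin

text \<open>Let \<open>\<beta>\<close> be a root of \<open>a x\<^sup>2 + b x + c\<close>; as \<open>\<beta>\<close> is not real, \<open>b\<^sup>2 < 4ac\<close>, and we may
  take \<open>a, c > 0\<close>. Multiplying by \<open>a x\<^sup>2 - b x + c\<close> gives \<open>A y\<^sup>2 + B y + C\<close> in \<open>y = x\<^sup>2\<close>
  with \<open>A = a\<^sup>2\<close>, \<open>B = 2ac - b\<^sup>2\<close>, \<open>C = c\<^sup>2\<close>, again of negative discriminant since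
  \<open>4AC - B\<^sup>2 = b\<^sup>2 (4ac - b\<^sup>2)\<close>. If \<open>B \<ge> 0\<close> all coefficients are non-negative and
  \<open>A x\<^sup>4 + B x\<^sup>2 + C\<close> vanishes at \<open>\<beta>\<close>. If \<open>B < 0\<close>, i.e. \<open>b\<^sup>2 > 2ac\<close>, the ratio
  \<open>4ac / (4ac - b\<^sup>2) \<ge> 1\<close> is more than halved, so iterating terminates. Finally, once some
  \<open>f \<noteq> 0\<close> with \<open>\<nat>\<close>-coefficients vanishes at \<open>\<beta>\<close>, adding the multiples \<open>x\<^sup>k f\<close> to one
  representation of \<open>\<alpha>\<close> gives infinitely many.\<close>

lemma map_poly_of_nat_add:
  "map_poly (of_nat :: nat \<Rightarrow> 'a::comm_semiring_1) (p + q) = map_poly of_nat p + map_poly of_nat q"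
  by (simp add: poly_eq_iff coeff_map_poly)

lemma map_poly_of_nat_mult:
  "map_poly (of_nat :: nat \<Rightarrow> 'a::comm_semiring_1) (p * q) = map_poly of_nat p * map_poly of_nat q"
  by (simp add: poly_eq_iff coeff_map_poly coeff_mult)

lemma map_poly_of_nat_pcompose:
  "map_poly (of_nat :: nat \<Rightarrow> 'a::comm_semiring_1) (p \<circ>\<^sub>p q) = map_poly of_nat p \<circ>\<^sub>p map_poly of_nat q"
  by (induction p)
    (simp_all add: pcompose_pCons map_poly_pCons map_poly_of_nat_add map_poly_of_nat_mult)

lemma nat_poly_annihilator_of_nonneg_quadratic:
  fixes a b c :: int
  assumes "a > 0" "b \<ge> 0" "c \<ge> 0"
  shows "\<exists>f :: nat poly. f \<noteq> 0 \<and> (\<forall>z::'a::comm_ring_1.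
           of_int a * z\<^sup>2 + of_int b * z + of_int c = 0 \<longrightarrow> poly (map_poly of_nat f) z = 0)"
proof (intro exI conjI allI impI)
  show "[:nat c, nat b, nat a:] \<noteq> 0" using \<open>a > 0\<close> by simp
  fix z :: 'a
  assume "of_int a * z\<^sup>2 + of_int b * z + of_int c = 0"
  then show "poly (map_poly of_nat [:nat c, nat b, nat a:]) z = 0"
    using assms by (simp add: map_poly_pCons algebra_simps power2_eq_square)
qed

lemma quadratic_mult_reflection:
  fixes a b c z :: "'a::comm_ring_1"
  shows "(a * z\<^sup>2 + b * z + c) * (a * z\<^sup>2 - b * z + c)
           = a\<^sup>2 * (z\<^sup>2)\<^sup>2 + (2 * a * c - b\<^sup>2) * z\<^sup>2 + c\<^sup>2"
  by (simp add: algebra_simps power2_eq_square)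

lemma nat_poly_annihilator_from_squared_quadratic:
  fixes a b c :: int
  assumes "\<exists>g :: nat poly. g \<noteq> 0 \<and> (\<forall>w::'a::comm_ring_1.
             of_int (a\<^sup>2) * w\<^sup>2 + of_int (2 * a * c - b\<^sup>2) * w + of_int (c\<^sup>2) = 0
             \<longrightarrow> poly (map_poly of_nat g) w = 0)"
  shows "\<exists>f :: nat poly. f \<noteq> 0 \<and> (\<forall>z::'a.
           of_int a * z\<^sup>2 + of_int b * z + of_int c = 0 \<longrightarrow> poly (map_poly of_nat f) z = 0)"
proof -
  obtain g :: "nat poly" where "g \<noteq> 0"
    and g: "\<And>w::'a. of_int (a\<^sup>2) * w\<^sup>2 + of_int (2 * a * c - b\<^sup>2) * w + of_int (c\<^sup>2) = 0
              \<Longrightarrow> poly (map_poly of_nat g) w = 0"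
    using assms by blast
  show ?thesis
  proof (intro exI conjI allI impI)
    show "g \<circ>\<^sub>p [:0, 0, 1:] \<noteq> 0" using \<open>g \<noteq> 0\<close> pcompose_eq_0 by fastforce
    fix z :: 'a
    assume "of_int a * z\<^sup>2 + of_int b * z + of_int c = 0"
    then have "of_int (a\<^sup>2) * (z\<^sup>2)\<^sup>2 + of_int (2 * a * c - b\<^sup>2) * z\<^sup>2 + of_int (c\<^sup>2) = 0"
      using quadratic_mult_reflection[of "of_int a" z "of_int b" "of_int c"] by simp
    then have "poly (map_poly of_nat g) (z\<^sup>2) = 0" by (rule g)
    then show "poly (map_poly of_nat (g \<circ>\<^sub>p [:0, 0, 1:])) z = 0"
      by (simp add: map_poly_of_nat_pcompose poly_pcompose map_poly_pCons power2_eq_square)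
  qed
qed

lemma discriminant_of_squared_quadratic:
  fixes a b c :: "'a::comm_ring_1"
  shows "4 * a\<^sup>2 * c\<^sup>2 - (2 * a * c - b\<^sup>2)\<^sup>2 = b\<^sup>2 * (4 * a * c - b\<^sup>2)"
  by (simp add: algebra_simps power2_eq_square)

lemma discriminant_ratio_halves:
  fixes a b c :: int
  assumes "2 * a * c < b\<^sup>2" "b\<^sup>2 < 4 * a * c"
    and bound: "4 * a * c \<le> 2 ^ Suc n * (4 * a * c - b\<^sup>2)"
  shows "4 * a\<^sup>2 * c\<^sup>2 \<le> 2 ^ n * (4 * a\<^sup>2 * c\<^sup>2 - (2 * a * c - b\<^sup>2)\<^sup>2)"
proof -
  have "a * c > 0" using assms(2) zero_le_power2[of b] by linarith
  have "4 * a\<^sup>2 * c\<^sup>2 = (a * c) * (4 * a * c)" by (simp add: power2_eq_square)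
  also have "\<dots> \<le> (a * c) * (2 ^ Suc n * (4 * a * c - b\<^sup>2))"
    using \<open>a * c > 0\<close> bound by (intro mult_left_mono) auto
  also have "\<dots> = 2 ^ n * ((2 * a * c) * (4 * a * c - b\<^sup>2))" by (simp add: algebra_simps)
  also have "\<dots> \<le> 2 ^ n * (b\<^sup>2 * (4 * a * c - b\<^sup>2))"
    using assms(1,2) by (intro mult_left_mono mult_right_mono) auto
  also have "b\<^sup>2 * (4 * a * c - b\<^sup>2) = 4 * a\<^sup>2 * c\<^sup>2 - (2 * a * c - b\<^sup>2)\<^sup>2"
    by (simp add: discriminant_of_squared_quadratic)
  finally show ?thesis .
qed

lemma nat_poly_annihilator_of_quadratic_bounded:
  fixes a b c :: int
  assumes "a > 0" "b\<^sup>2 < 4 * a * c" "4 * a * c \<le> 2 ^ n * (4 * a * c - b\<^sup>2)"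
  shows "\<exists>f :: nat poly. f \<noteq> 0 \<and> (\<forall>z::'a::comm_ring_1.
           of_int a * z\<^sup>2 + of_int b * z + of_int c = 0 \<longrightarrow> poly (map_poly of_nat f) z = 0)"
  using assms
proof (induction n arbitrary: a b c)
  case (0 a b c)
  then have "b = 0" "c > 0" by (auto simp: zero_less_mult_iff)
  with \<open>a > 0\<close> show ?case by (intro nat_poly_annihilator_of_nonneg_quadratic) auto
next
  case (Suc n a b c)
  have "a\<^sup>2 > 0" "c\<^sup>2 \<ge> 0" using \<open>a > 0\<close> by auto
  have "\<exists>g :: nat poly. g \<noteq> 0 \<and> (\<forall>w::'a.
          of_int (a\<^sup>2) * w\<^sup>2 + of_int (2 * a * c - b\<^sup>2) * w + of_int (c\<^sup>2) = 0
          \<longrightarrow> poly (map_poly of_nat g) w = 0)"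
  proof (cases "2 * a * c - b\<^sup>2 \<ge> 0")
    case True
    from \<open>a\<^sup>2 > 0\<close> this \<open>c\<^sup>2 \<ge> 0\<close> show ?thesis by (rule nat_poly_annihilator_of_nonneg_quadratic)
  next
    case False
    then have "b\<^sup>2 > 0" using Suc.prems(2) zero_le_power2[of b] by linarith
    then have "b\<^sup>2 * (4 * a * c - b\<^sup>2) > 0" using Suc.prems(2) by simp
    then have "(2 * a * c - b\<^sup>2)\<^sup>2 < 4 * a\<^sup>2 * c\<^sup>2"
      using discriminant_of_squared_quadratic[of a c b] by linarith
    moreover have "4 * a\<^sup>2 * c\<^sup>2 \<le> 2 ^ n * (4 * a\<^sup>2 * c\<^sup>2 - (2 * a * c - b\<^sup>2)\<^sup>2)"
      using False Suc.prems(2,3) by (intro discriminant_ratio_halves) auto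
    ultimately show ?thesis using Suc.IH \<open>a\<^sup>2 > 0\<close> by blast
  qed
  then show ?case by (rule nat_poly_annihilator_from_squared_quadratic)
qed

lemma nat_poly_annihilator_of_quadratic:
  fixes a b c :: int
  assumes disc: "b\<^sup>2 < 4 * a * c"
  shows "\<exists>f :: nat poly. f \<noteq> 0 \<and> (\<forall>z::'a::comm_ring_1.
           of_int a * z\<^sup>2 + of_int b * z + of_int c = 0 \<longrightarrow> poly (map_poly of_nat f) z = 0)"
proof -
  have annihilator_if_pos: "\<exists>f :: nat poly. f \<noteq> 0 \<and> (\<forall>z::'a.
           of_int a * z\<^sup>2 + of_int b * z + of_int c = 0 \<longrightarrow> poly (map_poly of_nat f) z = 0)"
    if "a > 0" "b\<^sup>2 < 4 * a * c" for a b c :: int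
  proof (rule nat_poly_annihilator_of_quadratic_bounded)
    have "a * c \<ge> 0" using that zero_le_power2[of b] by linarith
    then have "4 * a * c \<le> 2 ^ nat (4 * a * c)"
      using of_nat_less_two_power[of "nat (4 * a * c)", where 'a = int] by simp
    also have "\<dots> \<le> 2 ^ nat (4 * a * c) * (4 * a * c - b\<^sup>2)" using that by simp
    finally show "4 * a * c \<le> 2 ^ nat (4 * a * c) * (4 * a * c - b\<^sup>2)" .
  qed (use that in auto)
  have "a \<noteq> 0" using disc zero_le_power2[of b] by auto
  show ?thesis
  proof (cases "a > 0")
    case True
    from this disc show ?thesis by (rule annihilator_if_pos)
  next
    case False
    with \<open>a \<noteq> 0\<close> disc obtain f :: "nat poly" where "f \<noteq> 0"
      and f: "\<forall>z::'a. of_int (-a) * z\<^sup>2 + of_int (-b) * z + of_int (-c) = 0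
                \<longrightarrow> poly (map_poly of_nat f) z = 0"
      using annihilator_if_pos[of "-a" "-b" "-c"] by auto
    have "of_int (-a) * z\<^sup>2 + of_int (-b) * z + of_int (-c)
            = - (of_int a * z\<^sup>2 + of_int b * z + of_int c :: 'a)" for z
      by simp
    with \<open>f \<noteq> 0\<close> f show ?thesis by (metis neg_equal_0_iff_equal)
  qed
qed

lemma complex_in_Reals_if_square_nonneg:
  fixes w :: complex
  assumes "w\<^sup>2 = of_real d" "d \<ge> 0"
  shows "w \<in> \<real>"
proof -
  have "w\<^sup>2 = (of_real (sqrt d))\<^sup>2" using assms by (simp flip: of_real_power)
  then show ?thesis by (auto simp: power2_eq_iff)
qed

lemma discriminant_neg_if_nonreal_root:
  fixes a b c :: real and \<beta> :: complex
  assumes "a \<noteq> 0" "\<beta> \<notin> \<real>" and root: "of_real a * \<beta>\<^sup>2 + of_real b * \<beta> + of_real c = 0"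
  shows "b\<^sup>2 < 4 * a * c"
proof (rule ccontr)
  assume "\<not> b\<^sup>2 < 4 * a * c"
  let ?w = "2 * of_real a * \<beta> + of_real b"
  have "?w\<^sup>2 = 4 * of_real a * (of_real a * \<beta>\<^sup>2 + of_real b * \<beta> + of_real c) + of_real (b\<^sup>2 - 4 * a * c)"
    by (simp add: algebra_simps power2_eq_square)
  with root have "?w\<^sup>2 = of_real (b\<^sup>2 - 4 * a * c)" by simp
  with \<open>\<not> b\<^sup>2 < 4 * a * c\<close> have "?w \<in> \<real>"
    using complex_in_Reals_if_square_nonneg[of ?w "b\<^sup>2 - 4 * a * c"] by simp
  have "\<beta> = (?w - of_real b) / (2 * of_real a)" using \<open>a \<noteq> 0\<close> by (simp add: field_simps)
  also have "\<dots> \<in> \<real>"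
    by (intro Reals_divide Reals_diff Reals_mult Reals_of_real Reals_numeral \<open>?w \<in> \<real>\<close>)
  finally show False using \<open>\<beta> \<notin> \<real>\<close> by simp
qed

lemma eval_nat_poly_add: "eval_nat_poly (p + q) z = eval_nat_poly p z + eval_nat_poly q z"
  by (simp add: eval_nat_poly_def map_poly_of_nat_add)

lemma eval_nat_poly_mult: "eval_nat_poly (p * q) z = eval_nat_poly p z * eval_nat_poly q z"
  by (simp add: eval_nat_poly_def map_poly_of_nat_mult)

lemma infinite_eval_nat_poly_fibre:
  assumes "f \<noteq> 0" "eval_nat_poly f \<beta> = 0" "eval_nat_poly g \<beta> = \<alpha>"
  shows "infinite {h. eval_nat_poly h \<beta> = \<alpha>}"
proof -
  let ?h = "\<lambda>k. g + f * monom 1 k"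
  have "inj ?h"
  proof (rule injI)
    fix k l assume "?h k = ?h l"
    then have "degree (f * monom 1 k) = degree (f * monom 1 l)" by simp
    then show "k = l" using \<open>f \<noteq> 0\<close> by (simp add: degree_mult_eq degree_monom_eq)
  qed
  then have "infinite (range ?h)" by (simp add: finite_image_iff)
  moreover have "range ?h \<subseteq> {h. eval_nat_poly h \<beta> = \<alpha>}"
    using assms by (auto simp: eval_nat_poly_add eval_nat_poly_mult)
  ultimately show ?thesis using finite_subset by blast
qed

lemma nat_poly_root_of_nonreal_quadratic_irrational:
  fixes q :: "int poly" and \<beta> :: complex
  assumes "\<beta> \<notin> \<real>" "degree q = 2" "poly (map_poly of_int q) \<beta> = 0"
  shows "\<exists>f :: nat poly. f \<noteq> 0 \<and> eval_nat_poly f \<beta> = 0"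
proof -
  define a b c where "a = coeff q 2" and "b = coeff q 1" and "c = coeff q 0"
  have "a \<noteq> 0" using \<open>degree q = 2\<close> leading_coeff_0_iff[of q] by (auto simp: a_def)
  have root: "of_int a * \<beta>\<^sup>2 + of_int b * \<beta> + of_int c = 0"
    using assms(2,3)
    by (simp add: a_def b_def c_def poly_altdef degree_map_poly coeff_map_poly numeral_2_eq_2 atMost_Suc add.assoc)
  then have "(of_int b)\<^sup>2 < 4 * of_int a * (of_int c :: real)"
    using discriminant_neg_if_nonreal_root[of "of_int a" \<beta> "of_int b" "of_int c"] \<open>a \<noteq> 0\<close> assms(1)
    by simp
  then have "b\<^sup>2 < 4 * a * c" by (metis of_int_less_iff of_int_mult of_int_numeral of_int_power)
  then obtain f :: "nat poly" where "f \<noteq> 0" and f: "\<forall>z::complex.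
      of_int a * z\<^sup>2 + of_int b * z + of_int c = 0 \<longrightarrow> poly (map_poly of_nat f) z = 0"
    using nat_poly_annihilator_of_quadratic by blast
  with root show ?thesis by (auto simp: eval_nat_poly_def)
qed

theorem proposition9:
  fixes \<beta> :: complex
  assumes nonreal: "\<beta> \<notin> \<real>"
    and quad: "\<exists>q :: int poly. degree q = 2 \<and> poly (map_poly of_int q) \<beta> = 0"
  shows "(\<exists>f :: nat poly. f \<noteq> 0 \<and> eval_nat_poly f \<beta> = 0)
         \<and> p_count \<beta> 0 = \<infinity>
         \<and> (\<forall>\<alpha> :: complex. p_count \<beta> \<alpha> \<in> {0, \<infinity>})"
proof -
  obtain f :: "nat poly" where f: "f \<noteq> 0" "eval_nat_poly f \<beta> = 0"
    using quad nonreal nat_poly_root_of_nonreal_quadratic_irrational by blast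
  have "p_count \<beta> \<alpha> = \<infinity>" if "eval_nat_poly g \<beta> = \<alpha>" for g \<alpha>
    using infinite_eval_nat_poly_fibre[OF f that] by (simp add: p_count_def)
  moreover have "p_count \<beta> \<alpha> = 0" if "\<nexists>g. eval_nat_poly g \<beta> = \<alpha>" for \<alpha>
    using that by (simp add: p_count_def zero_enat_def)
  ultimately show ?thesis using f by blast
qed

end
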